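(* Let $d\ge1$, $\lambda>0$, $\delta>0$, and let $f:\mathbb{R}^d\to\mathbb{R}$ be convex and satisfy: (A1) $f$ is continuous and has at least one minimizer; (A2) $\int_{\mathbb{R}^d}\exp(-f(y)/\delta)\,dy<+\infty$. Then for every $x\in\mathbb{R}^d$, \[\nabla f^{\lambda,\delta}(x)\in\partial_{d\delta}f\big(\operatorname{zprox}^\delta_{\lambda,f}(x)\big).\] Consequently, for the ZOPPA sequence $(x^k)$ and $X^\star=\operatorname{argmin}f$, for all $k\ge1$, \[f(x^k)-\min_yf(y)\le\|\nabla f^{\lambda,\delta}(x^{k-1})\|\operatorname{dist}(x^k,X^\star)+d\delta.\]
   Context: For $\varepsilon\ge0$, the $\varepsilon$-subdifferential is $\partial_\varepsilon f(z)=\{g\in\mathbb{R}^d: f(y)\ge f(z)+\langle g,y-z\rangle-\varepsilon\ \forall y\in\mathbb{R}^d\}$. The zeroth-order proximal operator is $\operatorname{zprox}^\delta_{\lambda,f}(x)=\dfrac{\mathbb{E}_{y\sim\mathcal N(x,\lambda\delta I)}[y\exp(-f(y)/\delta)]}{\mathbb{E}_{y\sim\mathcal N(x,\lambda\delta I)}[\exp(-f(y)/\delta)]}$; the soft Moreau envelope is $f^{\lambda,\delta}(x)=-\delta\log\mathbb{E}_{y\sim\mathcal N(x,\lambda\delta I)}[\exp(-f(y)/\delta)]$. ZOPPA: $x^{k+1}=\operatorname{zprox}^\delta_{\lambda,f}(x^k)$ from any $x^0$. *)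

theory Defs
  imports "HOL-Analysis.Analysis"
begin

definition gauss_density :: "real \<Rightarrow> 'a::euclidean_space \<Rightarrow> 'a \<Rightarrow> real" where
  "gauss_density s x y =
     (2 * pi * s) powr (- real DIM('a) / 2) * exp (- (norm (y - x))\<^sup>2 / (2 * s))"

definition eps_subdiff :: "('a::euclidean_space \<Rightarrow> real) \<Rightarrow> real \<Rightarrow> 'a \<Rightarrow> 'a set" where
  "eps_subdiff f \<epsilon> z = {g. \<forall>y. f y \<ge> f z + inner g (y - z) - \<epsilon>}"

definition zprox :: "real \<Rightarrow> real \<Rightarrow> ('a::euclidean_space \<Rightarrow> real) \<Rightarrow> 'a \<Rightarrow> 'a" where
  "zprox \<delta> lam f x =
     (integral\<^sup>L lborel (\<lambda>y. (gauss_density (lam * \<delta>) x y * exp (- f y / \<delta>)) *\<^sub>R y))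
     /\<^sub>R (integral\<^sup>L lborel (\<lambda>y. gauss_density (lam * \<delta>) x y * exp (- f y / \<delta>)))"

definition soft_moreau :: "real \<Rightarrow> real \<Rightarrow> ('a::euclidean_space \<Rightarrow> real) \<Rightarrow> 'a \<Rightarrow> real" where
  "soft_moreau lam \<delta> f x =
     - \<delta> * ln (integral\<^sup>L lborel (\<lambda>y. gauss_density (lam * \<delta>) x y * exp (- f y / \<delta>)))"

end

theory Submission
  imports Defs
begin

text \<open>Write \<open>s = \<lambda>\<delta>\<close> and \<open>w\<^sub>x(y) = N(y; x, s I) exp (- f y / \<delta>)\<close>, \<open>Z(x) = \<integral> w\<^sub>x\<close>; then
  the soft Moreau envelope is \<open>- \<delta> ln Z\<close> and \<open>zprox x\<close> is the \<open>w\<^sub>x\<close>-mean of \<open>y\<close>. A uniform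
  second-order bound on the Gaussian kernel lets us differentiate under the integral, giving the
  gradient \<open>(x - zprox x) / \<lambda>\<close>.

  For the \<open>d \<delta>\<close>-subgradient inequality at a point \<open>y\<^sub>0\<close>, contract space towards \<open>y\<^sub>0\<close> by
  \<open>y \<mapsto> (1 - t) y\<^sub>0 + t y\<close>, whose Jacobian is \<open>t\<^sup>d\<close>. Convexity of \<open>f\<close> and strong convexity of
  the quadratic give \<open>w\<^sub>x(y) (1 + (1 - t) E(y) - O((1 - t)\<^sup>2)) \<le> w\<^sub>x((1 - t) y\<^sub>0 + t y)\<close> with
  \<open>E(y) = (f y - f y\<^sub>0) / \<delta> + \<langle>y - x, y - y\<^sub>0\<rangle> / s\<close>. Integrating, dividing by \<open>1 - t\<close> and letting
  \<open>t \<rightarrow> 1\<close> yields \<open>\<integral> w\<^sub>x E \<le> d Z(x)\<close>, and Jensen's inequality for the convex function \<open>E\<close> bounds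
  the left side below by \<open>Z(x) E(zprox x)\<close>; multiplied by \<open>\<delta>\<close> this is the claimed inequality.
  The rate bound is that inequality at the minimiser nearest to \<open>x\<^sup>k\<close>, plus Cauchy-Schwarz.\<close>

lemma exp_minus_one_minus_self_le:
  fixes a :: real
  shows "exp a - 1 - a \<le> a\<^sup>2 * exp \<bar>a\<bar>"
proof -
  have exp_inv: "exp a * (1 - a) \<le> 1"
    using mult_left_mono[OF exp_ge_add_one_self[of "-a"], of "exp a"] by (simp add: exp_minus)
  then have "exp a - 1 - a \<le> a * (exp a - 1)" by (simp add: algebra_simps)
  also have "\<dots> \<le> a\<^sup>2 * exp \<bar>a\<bar>"
  proof (cases "a \<ge> 0")
    case True
    then have "a * (exp a - 1) \<le> a * (a * exp a)"
      using exp_inv by (intro mult_left_mono) (auto simp: algebra_simps)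
    then show ?thesis using True by (simp add: power2_eq_square)
  next
    case False
    moreover have "1 - exp a \<le> - a" using exp_ge_add_one_self[of a] by linarith
    ultimately have "(-a) * (1 - exp a) \<le> (-a) * (-a)" by (intro mult_left_mono) auto
    also have "\<dots> \<le> a\<^sup>2 * exp \<bar>a\<bar>" by (simp add: power2_eq_square mult_le_cancel_left1)
    finally show ?thesis by (simp add: algebra_simps)
  qed
  finally show ?thesis .
qed

lemma sq_mult_exp_neg_sq_le:
  fixes r s :: real
  assumes "s > 0"
  shows "r\<^sup>2 * exp (- r\<^sup>2 / s) \<le> s"
proof -
  define X where "X = r\<^sup>2 / s"
  have "X \<le> exp X" using exp_ge_add_one_self[of X] by linarith
  then have "X * exp (- X) \<le> 1" by (simp add: exp_minus field_simps)
  then have "s * (X * exp (- X)) \<le> s" using assms by simp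
  then show ?thesis using assms by (simp add: X_def)
qed

lemma le_one_plus_sq: "(r::real) \<le> 1 + r\<^sup>2"
  using zero_le_power2[of "r - 1/2"] by (simp add: power2_eq_square algebra_simps)

lemma inner_convex_combination:
  fixes u v a b :: "'a::real_inner"
  shows "inner ((1 - t) *\<^sub>R u + t *\<^sub>R v - a) ((1 - t) *\<^sub>R u + t *\<^sub>R v - b)
       = (1 - t) * inner (u - a) (u - b) + t * inner (v - a) (v - b) - t * (1 - t) * (norm (v - u))\<^sup>2"
proof -
  have "(1 - t) *\<^sub>R u + t *\<^sub>R v - a = (1 - t) *\<^sub>R (u - a) + t *\<^sub>R (v - a)"
    "(1 - t) *\<^sub>R u + t *\<^sub>R v - b = (1 - t) *\<^sub>R (u - b) + t *\<^sub>R (v - b)"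
    by (simp_all add: algebra_simps)
  then show ?thesis
    unfolding power2_norm_eq_inner
    by (simp add: inner_add_left inner_add_right inner_diff_left inner_diff_right inner_commute
        algebra_simps power2_eq_square)
qed

lemma convex_on_inner_diff: "convex_on UNIV (\<lambda>y::'a::real_inner. inner (y - a) (y - b))"
proof (rule convex_onI)
  fix t :: real and u v :: 'a assume "0 < t" "t < 1"
  then show "inner ((1 - t) *\<^sub>R u + t *\<^sub>R v - a) ((1 - t) *\<^sub>R u + t *\<^sub>R v - b)
      \<le> (1 - t) * inner (u - a) (u - b) + t * inner (v - a) (v - b)"
    unfolding inner_convex_combination by simp
qed simp

lemma sq_succ_mult_exp_neg_sq_le:
  fixes r s :: real
  assumes s: "s > 0"
  shows "(r + 1)\<^sup>2 * exp (- r\<^sup>2 / (4 * s)) \<le> 8 * s + 2"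
proof -
  have "(r + 1)\<^sup>2 \<le> 2 * r\<^sup>2 + 2"
    using zero_le_power2[of "r - 1"] by (simp add: power2_eq_square algebra_simps)
  then have "(r + 1)\<^sup>2 * exp (- r\<^sup>2 / (4 * s))
      \<le> 2 * (r\<^sup>2 * exp (- r\<^sup>2 / (4 * s))) + 2 * exp (- r\<^sup>2 / (4 * s))"
    using mult_right_mono[of "(r + 1)\<^sup>2" "2 * r\<^sup>2 + 2" "exp (- r\<^sup>2 / (4 * s))"]
    by (simp add: algebra_simps)
  moreover have "r\<^sup>2 * exp (- r\<^sup>2 / (4 * s)) \<le> 4 * s" using s by (intro sq_mult_exp_neg_sq_le) auto
  moreover have "exp (- r\<^sup>2 / (4 * s)) \<le> 1" using s by (simp add: divide_nonpos_pos)
  ultimately show ?thesis by linarith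
qed

lemma exp_neg_sq_mult_exp_le:
  fixes a r s :: real
  assumes s: "s > 0" and a: "\<bar>a\<bar> \<le> (r + 1) / s"
  shows "exp (- r\<^sup>2 / (2 * s)) * exp \<bar>a\<bar> \<le> exp (2 / s) * exp (- r\<^sup>2 / (4 * s))"
proof -
  have "r + 1 \<le> r\<^sup>2 / 4 + 2"
    using zero_le_power2[of "r / 2 - 1"] by (simp add: field_simps power2_eq_square)
  then have "(r + 1) / s \<le> r\<^sup>2 / (4 * s) + 2 / s"
    using divide_right_mono[of "r + 1" "r\<^sup>2 / 4 + 2" s] s by (simp add: add_divide_distrib)
  moreover have "- r\<^sup>2 / (2 * s) + r\<^sup>2 / (4 * s) = - r\<^sup>2 / (4 * s)"
    using s by (simp add: field_simps)
  ultimately have "- r\<^sup>2 / (2 * s) + \<bar>a\<bar> \<le> 2 / s + - r\<^sup>2 / (4 * s)" using a by linarith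
  then show ?thesis by (simp flip: exp_add)
qed

text \<open>Second-order expansion of the Gaussian kernel under a shift of its centre: with
  \<open>r = norm (y - x)\<close>, \<open>p = inner h (y - x)\<close> and \<open>n = norm h\<close>, the shifted kernel is
  \<open>exp (- (r\<^sup>2 - 2 * p + n\<^sup>2) / (2 * s))\<close>.\<close>

lemma gaussian_shift_remainder_le:
  fixes s r p n :: real
  assumes s: "s > 0" and r: "0 \<le> r" and n: "0 \<le> n" "n \<le> 1" and p: "\<bar>p\<bar> \<le> r * n"
  shows "\<bar>exp (- (r\<^sup>2 - 2 * p + n\<^sup>2) / (2 * s)) - exp (- r\<^sup>2 / (2 * s)) * (1 + p / s)\<bar>
       \<le> (exp (2 / s) * (8 * s + 2) / s\<^sup>2 + 1 / (2 * s)) * n\<^sup>2"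
proof -
  define a where "a = (2 * p - n\<^sup>2) / (2 * s)"
  define E where "E = exp (- r\<^sup>2 / (2 * s))"
  have E: "0 < E" "E \<le> 1" using s by (auto simp: E_def divide_nonpos_pos)
  have "- (r\<^sup>2 - 2 * p + n\<^sup>2) / (2 * s) = - r\<^sup>2 / (2 * s) + a"
    using s by (simp add: a_def field_simps)
  then have remainder: "exp (- (r\<^sup>2 - 2 * p + n\<^sup>2) / (2 * s)) - E * (1 + p / s)
      = E * (exp a - 1 - a) - E * (n\<^sup>2 / (2 * s))"
    using s by (simp add: E_def a_def field_simps flip: exp_add)
  have "n\<^sup>2 \<le> n" using n by (simp add: power2_eq_square mult_left_le)
  moreover have "2 * (r + 1) * n = 2 * (r * n) + 2 * n" by (simp add: algebra_simps)
  ultimately have "\<bar>2 * p - n\<^sup>2\<bar> \<le> 2 * (r + 1) * n"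
    using p n zero_le_power2[of n] unfolding abs_le_iff by linarith
  then have a_le: "\<bar>a\<bar> \<le> (r + 1) * n / s"
    using s by (simp add: a_def abs_div field_simps)
  also have "\<dots> \<le> (r + 1) / s"
    using r n s by (intro divide_right_mono mult_left_le) auto
  finally have "E * exp \<bar>a\<bar> \<le> exp (2 / s) * exp (- r\<^sup>2 / (4 * s))"
    unfolding E_def by (rule exp_neg_sq_mult_exp_le[OF s])
  moreover have "a\<^sup>2 \<le> ((r + 1) * n / s)\<^sup>2"
    using a_le by (metis abs_ge_zero power2_abs power_mono)
  ultimately have "E * (a\<^sup>2 * exp \<bar>a\<bar>) \<le> ((r + 1) * n / s)\<^sup>2 * (exp (2 / s) * exp (- r\<^sup>2 / (4 * s)))"
    using E by (simp add: mult.left_commute[of E] mult_mono)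
  also have "\<dots> = exp (2 / s) * ((r + 1)\<^sup>2 * exp (- r\<^sup>2 / (4 * s))) * n\<^sup>2 / s\<^sup>2"
    by (simp add: power_mult_distrib power_divide)
  also have "\<dots> \<le> exp (2 / s) * (8 * s + 2) * n\<^sup>2 / s\<^sup>2"
    using sq_succ_mult_exp_neg_sq_le[OF s, of r]
    by (intro divide_right_mono mult_right_mono mult_left_mono) auto
  finally have quadratic: "E * (a\<^sup>2 * exp \<bar>a\<bar>) \<le> exp (2 / s) * (8 * s + 2) / s\<^sup>2 * n\<^sup>2" by simp
  have "0 \<le> exp a - 1 - a" using exp_ge_add_one_self[of a] by linarith
  then have "0 \<le> E * (exp a - 1 - a)" using E by simp
  moreover have "E * (exp a - 1 - a) \<le> E * (a\<^sup>2 * exp \<bar>a\<bar>)"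
    using exp_minus_one_minus_self_le[of a] E by (intro mult_left_mono) auto
  moreover have "0 \<le> E * (n\<^sup>2 / (2 * s))" using E s by simp
  moreover have "E * (n\<^sup>2 / (2 * s)) \<le> n\<^sup>2 / (2 * s)"
    using E s by (intro mult_left_le_one_le) auto
  ultimately show ?thesis
    unfolding E_def[symmetric] remainder using quadratic by (simp add: algebra_simps)
qed

lemma gaussian_kernel_taylor:
  fixes s :: real
  assumes s: "s > 0"
  obtains K where "K \<ge> 0"
    "\<And>x y h :: 'a::real_inner. norm h \<le> 1 \<Longrightarrow>
       \<bar>exp (- (norm (y - (x + h)))\<^sup>2 / (2 * s)) - exp (- (norm (y - x))\<^sup>2 / (2 * s)) * (1 + inner h (y - x) / s)\<bar>
         \<le> K * (norm h)\<^sup>2"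
proof
  show "exp (2 / s) * (8 * s + 2) / s\<^sup>2 + 1 / (2 * s) \<ge> 0" using s by simp
  fix x y h :: 'a assume "norm h \<le> 1"
  moreover have "(norm (y - (x + h)))\<^sup>2 = (norm (y - x))\<^sup>2 - 2 * inner h (y - x) + (norm h)\<^sup>2"
    unfolding power2_norm_eq_inner
    by (simp add: inner_diff_left inner_diff_right inner_add_right inner_commute algebra_simps)
  moreover have "\<bar>inner h (y - x)\<bar> \<le> norm (y - x) * norm h"
    by (metis Cauchy_Schwarz_ineq2 mult.commute)
  ultimately show "\<bar>exp (- (norm (y - (x + h)))\<^sup>2 / (2 * s))
      - exp (- (norm (y - x))\<^sup>2 / (2 * s)) * (1 + inner h (y - x) / s)\<bar>
      \<le> (exp (2 / s) * (8 * s + 2) / s\<^sup>2 + 1 / (2 * s)) * (norm h)\<^sup>2"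
    using gaussian_shift_remainder_le[OF s] by simp
qed

lemma lborel_integrable_affine:
  fixes g :: "'a::euclidean_space \<Rightarrow> real"
  assumes g: "integrable lborel g" and c: "c \<noteq> 0"
  shows "integrable lborel (\<lambda>x. g (a + c *\<^sub>R x))"
proof -
  have [measurable]: "g \<in> borel_measurable borel" using g by auto
  have "(\<integral>\<^sup>+x. ennreal (norm (g x)) \<partial>lborel)
      = \<bar>c\<bar> ^ DIM('a) * (\<integral>\<^sup>+x. ennreal (norm (g (a + c *\<^sub>R x))) \<partial>lborel)"
    by (subst lborel_affine[OF c, of a])
       (simp add: nn_integral_density nn_integral_distr nn_integral_cmult)
  moreover have "(\<integral>\<^sup>+x. ennreal (norm (g x)) \<partial>lborel) < \<infinity>"
    using g by (simp add: integrable_iff_bounded)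
  ultimately show ?thesis
    using c by (auto simp: integrable_iff_bounded ennreal_mult_less_top)
qed

lemma lborel_integral_affine:
  fixes g :: "'a::euclidean_space \<Rightarrow> real"
  assumes g: "integrable lborel g" and c: "c \<noteq> 0"
  shows "integral\<^sup>L lborel g = \<bar>c\<bar> ^ DIM('a) * (\<integral>x. g (a + c *\<^sub>R x) \<partial>lborel)"
proof -
  have [measurable]: "g \<in> borel_measurable borel" using g by auto
  have "integral\<^sup>L lborel g
      = integral\<^sup>L (density (distr lborel borel (\<lambda>x. a + c *\<^sub>R x)) (\<lambda>_. \<bar>c\<bar> ^ DIM('a))) g"
    using lborel_affine[OF c, of a] by simp
  also have "\<dots> = integral\<^sup>L (distr lborel borel (\<lambda>x. a + c *\<^sub>R x)) (\<lambda>x. \<bar>c\<bar> ^ DIM('a) * g x)"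
    by (subst integral_density) auto
  also have "\<dots> = \<bar>c\<bar> ^ DIM('a) * (\<integral>x. g (a + c *\<^sub>R x) \<partial>lborel)"
    by (subst integral_distr) auto
  finally show ?thesis .
qed

lemma convex_on_affine_minorant:
  fixes f :: "'a::euclidean_space \<Rightarrow> real"
  assumes cvx: "convex_on UNIV f" and cont: "continuous_on UNIV f" and e: "\<epsilon> > 0"
  obtains g b where "\<And>y. inner g y + b \<le> f y" and "f z - \<epsilon> \<le> inner g z + b"
proof -
  define S where "S = {p. f (fst p) \<le> snd p}"
  have "convex S"
    using convex_epigraphI[OF cvx] by (simp add: S_def epigraph_def)
  moreover have "closed S" unfolding S_def
    by (intro closed_Collect_le continuous_on_compose2[OF cont continuous_on_fst] continuous_on_snd) auto
  moreover have "(z, f z - \<epsilon>) \<notin> S" using e by (simp add: S_def)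
  ultimately obtain a c where "inner a (z, f z - \<epsilon>) < c" "\<forall>p\<in>S. inner a p > c"
    using separating_hyperplane_closed_point by blast
  moreover obtain a1 a2 where a: "a = (a1, a2)" by (cases a)
  ultimately have below: "inner a1 z + a2 * (f z - \<epsilon>) < c"
    and above: "\<And>y t. f y \<le> t \<Longrightarrow> inner a1 y + a2 * t > c"
    by (auto simp: S_def)
  have "a2 * \<epsilon> > 0" using below above[of z "f z"] by (simp add: algebra_simps)
  then have a2: "a2 > 0" using e by (simp add: zero_less_mult_iff)
  show ?thesis
  proof
    fix y
    show "inner (- (1 / a2) *\<^sub>R a1) y + c / a2 \<le> f y"
      using above[of y "f y"] a2 by (simp add: field_simps)
  next
    show "f z - \<epsilon> \<le> inner (- (1 / a2) *\<^sub>R a1) z + c / a2"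
      using below a2 by (simp add: field_simps)
  qed
qed

lemma jensen_weighted_integral:
  fixes \<phi> :: "'a::euclidean_space \<Rightarrow> real" and w :: "'b \<Rightarrow> real" and X :: "'b \<Rightarrow> 'a"
  assumes cvx: "convex_on UNIV \<phi>" and cont: "continuous_on UNIV \<phi>"
    and w: "integrable M w" "\<And>y. w y \<ge> 0" "integral\<^sup>L M w > 0"
    and wX: "integrable M (\<lambda>y. w y *\<^sub>R X y)" and w\<phi>: "integrable M (\<lambda>y. w y * \<phi> (X y))"
  shows "integral\<^sup>L M w * \<phi> (integral\<^sup>L M (\<lambda>y. w y *\<^sub>R X y) /\<^sub>R integral\<^sup>L M w)
       \<le> integral\<^sup>L M (\<lambda>y. w y * \<phi> (X y))"
    (is "?Z * \<phi> ?z \<le> _")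
proof (rule field_le_epsilon)
  fix e :: real assume "e > 0"
  then have "e / ?Z > 0" using w(3) by simp
  then obtain g b where minor: "\<And>y. inner g y + b \<le> \<phi> y" and tight: "\<phi> ?z - e / ?Z \<le> inner g ?z + b"
    using convex_on_affine_minorant[OF cvx cont] by blast
  have "?Z * (inner g ?z + b) = inner g (integral\<^sup>L M (\<lambda>y. w y *\<^sub>R X y)) + integral\<^sup>L M (\<lambda>y. b * w y)"
    using w(3) by (simp add: algebra_simps)
  also have "\<dots> = integral\<^sup>L M (\<lambda>y. inner g (w y *\<^sub>R X y) + b * w y)"
    unfolding integral_inner_right[OF wX, symmetric]
    by (rule Bochner_Integration.integral_add[symmetric])
       (use w(1) integrable_inner_right[OF wX] in \<open>auto simp del: inner_scaleR_right\<close>)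
  also have "\<dots> \<le> integral\<^sup>L M (\<lambda>y. w y * \<phi> (X y))"
  proof (rule integral_mono)
    show "integrable M (\<lambda>y. inner g (w y *\<^sub>R X y) + b * w y)"
      using w(1) integrable_inner_right[OF wX] by (simp del: inner_scaleR_right)
    show "integrable M (\<lambda>y. w y * \<phi> (X y))" by (rule w\<phi>)
    fix y
    show "inner g (w y *\<^sub>R X y) + b * w y \<le> w y * \<phi> (X y)"
      using mult_left_mono[OF minor[of "X y"] w(2)] by (simp add: algebra_simps)
  qed
  finally show "?Z * \<phi> ?z \<le> integral\<^sup>L M (\<lambda>y. w y * \<phi> (X y)) + e"
    using mult_left_mono[OF tight, of ?Z] w(3) by (simp add: algebra_simps)
qed

lemma has_derivative_of_quadratic_remainder:
  fixes F :: "'a::real_normed_vector \<Rightarrow> real"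
  assumes "bounded_linear L" and "K \<ge> 0"
    and rem: "\<And>h. norm h \<le> 1 \<Longrightarrow> \<bar>F (x + h) - F x - L h\<bar> \<le> K * (norm h)\<^sup>2"
  shows "(F has_derivative L) (at x)"
  unfolding has_derivative_at_alt
proof (intro conjI allI impI assms(1))
  fix e :: real assume e: "e > 0"
  show "\<exists>d>0. \<forall>y. norm (y - x) < d \<longrightarrow> norm (F y - F x - L (y - x)) \<le> e * norm (y - x)"
  proof (intro exI[of _ "min 1 (e / (K + 1))"] conjI allI impI)
    show "min 1 (e / (K + 1)) > 0" using e \<open>K \<ge> 0\<close> by simp
    fix y assume y: "norm (y - x) < min 1 (e / (K + 1))"
    then have "K * norm (y - x) \<le> e"
      using \<open>K \<ge> 0\<close> e by (simp add: field_simps) (use norm_ge_zero[of "y - x"] in linarith)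
    then have "K * (norm (y - x))\<^sup>2 \<le> e * norm (y - x)"
      by (simp add: power2_eq_square mult_right_mono mult.assoc[symmetric])
    moreover have "\<bar>F (x + (y - x)) - F x - L (y - x)\<bar> \<le> K * (norm (y - x))\<^sup>2"
      using y by (intro rem) simp
    ultimately show "norm (F y - F x - L (y - x)) \<le> e * norm (y - x)" by simp
  qed
qed

lemma inverse_power_difference_quotient:
  "((\<lambda>t::real. (inverse (t ^ n) - 1) / (1 - t)) \<longlongrightarrow> real n) (at_left 1)"
proof -
  have "((\<lambda>t::real. inverse (t ^ n)) has_field_derivative - real n) (at 1)"
    by (auto intro!: derivative_eq_intros)
  then have "((\<lambda>t::real. (inverse (t ^ n) - 1) / (t - 1)) \<longlongrightarrow> - real n) (at_left 1)"
    unfolding has_field_derivative_iff by (simp add: filterlim_at_split)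
  then have "((\<lambda>t::real. - ((inverse (t ^ n) - 1) / (t - 1))) \<longlongrightarrow> real n) (at_left 1)"
    using tendsto_minus by fastforce
  then show ?thesis by (simp add: minus_divide_right)
qed

lemma suboptimality_from_eps_subgradient:
  fixes f :: "'a::euclidean_space \<Rightarrow> real"
  assumes cont: "continuous_on UNIV f" and minex: "\<exists>x0. \<forall>y. f x0 \<le> f y"
    and g: "g \<in> eps_subdiff f \<epsilon> z"
  shows "f z - (INF y. f y) \<le> norm g * infdist z {p. \<forall>y. f p \<le> f y} + \<epsilon>"
proof -
  define X where "X = {p. \<forall>y. f p \<le> f y}"
  obtain x0 where x0: "x0 \<in> X" using minex by (auto simp: X_def)
  then have "X = {p. f p \<le> f x0}" by (auto simp: X_def intro: order_trans)
  then have "closed X" by (simp add: closed_Collect_le cont)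
  then obtain p where p: "p \<in> X" "infdist z X = dist z p"
    using infdist_attains_inf x0 by blast
  then have "(INF y. f y) = f p" by (intro cInf_eq_minimum) (auto simp: X_def)
  moreover have "f p \<ge> f z + inner g (p - z) - \<epsilon>"
    using g by (simp add: eps_subdiff_def)
  then have "f z - f p \<le> inner g (z - p) + \<epsilon>"
    by (simp add: inner_diff_right)
  moreover have "inner g (z - p) \<le> norm g * dist z p"
    by (simp add: dist_norm norm_cauchy_schwarz)
  ultimately show ?thesis using p(2) by (simp add: X_def[symmetric])
qed

locale soft_prox_setting =
  fixes f :: "'a::euclidean_space \<Rightarrow> real" and lam \<delta> :: real
  assumes lam_pos: "lam > 0" and delta_pos: "\<delta> > 0"
    and convex_f: "convex_on UNIV f"
    and continuous_f: "continuous_on UNIV f"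
    and minimizer_exists: "\<exists>x0. \<forall>y. f x0 \<le> f y"
    and integrable_exp_f: "integrable lborel (\<lambda>y. exp (- f y / \<delta>))"
begin

definition "s = lam * \<delta>"
definition "gauss_const = (2 * pi * s) powr (- real DIM('a) / 2)"
definition "w x y = gauss_density s x y * exp (- f y / \<delta>)"
definition "Z x = integral\<^sup>L lborel (w x)"
definition "moment x = integral\<^sup>L lborel (\<lambda>y. w x y *\<^sub>R y)"

lemma s_pos: "s > 0"
  using lam_pos delta_pos by (simp add: s_def)

lemma gauss_const_pos: "gauss_const > 0"
  using s_pos by (simp add: gauss_const_def)

lemma w_eq: "w x y = gauss_const * exp (- (norm (y - x))\<^sup>2 / (2 * s)) * exp (- f y / \<delta>)"
  by (simp add: w_def gauss_density_def gauss_const_def)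

lemma w_pos: "w x y > 0"
  using gauss_const_pos by (simp add: w_eq)

lemma f_measurable [measurable]: "f \<in> borel_measurable borel"
  using continuous_f by (rule borel_measurable_continuous_onI)

lemma w_measurable [measurable]: "w x \<in> borel_measurable borel"
  unfolding w_eq[abs_def] by measurable

lemma integrable_w_scaleR:
  fixes g :: "'a \<Rightarrow> 'b::{banach, second_countable_topology}"
  assumes [measurable]: "g \<in> borel_measurable borel"
    and g: "\<And>y. norm (g y) \<le> a + b * (norm (y - x))\<^sup>2"
  shows "integrable lborel (\<lambda>y. w x y *\<^sub>R g y)"
proof (rule Bochner_Integration.integrable_bound)
  define C where "C = gauss_const * (\<bar>a\<bar> + \<bar>b\<bar> * (2 * s))"
  show "integrable lborel (\<lambda>y. C * exp (- f y / \<delta>))"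
    using integrable_exp_f by simp
  show "(\<lambda>y. w x y *\<^sub>R g y) \<in> borel_measurable lborel" by measurable
  show "AE y in lborel. norm (w x y *\<^sub>R g y) \<le> norm (C * exp (- f y / \<delta>))"
  proof (rule AE_I2)
    fix y
    define r where "r = norm (y - x)"
    define G where "G = exp (- r\<^sup>2 / (2 * s))"
    have G: "0 \<le> G" "G \<le> 1" using s_pos by (auto simp: G_def divide_nonpos_pos)
    have "r\<^sup>2 * G \<le> 2 * s" unfolding G_def by (rule sq_mult_exp_neg_sq_le) (use s_pos in simp)
    moreover have "b * (r\<^sup>2 * G) \<le> \<bar>b\<bar> * (r\<^sup>2 * G)"
      using G by (intro mult_right_mono) auto
    ultimately have "b * r\<^sup>2 * G \<le> \<bar>b\<bar> * (2 * s)"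
      using mult_left_mono[of "r\<^sup>2 * G" "2 * s" "\<bar>b\<bar>"] by (simp add: mult.assoc)
    moreover have "G * a \<le> \<bar>a\<bar>"
      using mult_left_mono[OF abs_ge_self G(1), of a] mult_left_le_one_le[of "\<bar>a\<bar>" G] G by simp
    ultimately have "G * (a + b * r\<^sup>2) \<le> \<bar>a\<bar> + \<bar>b\<bar> * (2 * s)"
      by (simp add: algebra_simps)
    moreover have "norm (g y) * G \<le> (a + b * r\<^sup>2) * G"
      using g[of y] G by (simp add: r_def mult_right_mono)
    ultimately have "gauss_const * exp (- f y / \<delta>) * (norm (g y) * G) \<le> C * exp (- f y / \<delta>)"
      using gauss_const_pos unfolding C_def
      by (simp add: mult.commute mult.left_commute mult_left_mono)
    then show "norm (w x y *\<^sub>R g y) \<le> norm (C * exp (- f y / \<delta>))"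
      using w_pos[of x y] gauss_const_pos s_pos unfolding w_eq G_def r_def C_def
      by (simp add: abs_mult mult_ac)
  qed
qed

lemma integrable_w_mult:
  assumes "g \<in> borel_measurable borel" "\<And>y. \<bar>g y\<bar> \<le> a + b * (norm (y - x))\<^sup>2"
  shows "integrable lborel (\<lambda>y. w x y * g y)"
  using integrable_w_scaleR[of g a b x] assms by simp

lemma integrable_w: "integrable lborel (w x)"
  using integrable_w_mult[of "\<lambda>_. 1" 1 0 x] by simp

lemma integrable_w_moment: "integrable lborel (\<lambda>y. w x y *\<^sub>R y)"
proof (rule integrable_w_scaleR)
  fix y
  have "norm y \<le> norm x + norm (y - x)" using norm_triangle_ineq[of x "y - x"] by simp
  then show "norm y \<le> (norm x + 1) + 1 * (norm (y - x))\<^sup>2"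
    using le_one_plus_sq[of "norm (y - x)"] by simp
qed simp

lemma Z_pos: "Z x > 0"
proof -
  have nonneg: "AE y in lborel. 0 \<le> w x y" using w_pos by (simp add: less_imp_le)
  have "Z x \<noteq> 0"
  proof
    assume "Z x = 0"
    then have "AE y in lborel. w x y = 0"
      using integral_nonneg_eq_0_iff_AE[OF integrable_w nonneg] by (simp add: Z_def)
    moreover have "w x y \<noteq> 0" for y using w_pos[of x y] by simp
    ultimately have "AE y::'a in lborel. False" by simp
    then have "ae_filter (lborel :: 'a measure) = bot" using trivial_limit_def by blast
    then show False by (simp add: ae_filter_eq_bot_iff)
  qed
  moreover have "Z x \<ge> 0" unfolding Z_def using nonneg by (rule integral_nonneg_AE)
  ultimately show ?thesis by simp
qed

lemma w_fun: "w x = (\<lambda>y. gauss_density (lam * \<delta>) x y * exp (- f y / \<delta>))"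
  by (rule ext) (simp add: w_def s_def)

lemma zprox_eq: "zprox \<delta> lam f x = moment x /\<^sub>R Z x"
  by (simp add: zprox_def moment_def Z_def w_fun)

lemma soft_moreau_eq: "soft_moreau lam \<delta> f x = - \<delta> * ln (Z x)"
  by (simp add: soft_moreau_def Z_def w_fun)

lemma integral_w_inner:
  shows "integrable lborel (\<lambda>y. w x y * inner v (y - x))"
    and "integral\<^sup>L lborel (\<lambda>y. w x y * inner v (y - x)) = inner v (moment x - Z x *\<^sub>R x)"
proof -
  have eq: "(\<lambda>y. w x y * inner v (y - x)) = (\<lambda>y. inner v (w x y *\<^sub>R y) - inner v x * w x y)"
    by (simp add: inner_diff_right algebra_simps)
  show "integrable lborel (\<lambda>y. w x y * inner v (y - x))"
    unfolding eq using integrable_inner_right[OF integrable_w_moment[of x], of v] integrable_w[of x]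
    by simp
  have const: "integrable lborel (\<lambda>y. inner v x * w x y)" using integrable_w by simp
  show "integral\<^sup>L lborel (\<lambda>y. w x y * inner v (y - x)) = inner v (moment x - Z x *\<^sub>R x)"
    unfolding eq Bochner_Integration.integral_diff[OF integrable_inner_right[OF integrable_w_moment] const]
      integral_inner_right[OF integrable_w_moment] moment_def[symmetric]
    by (simp add: Z_def inner_diff_right)
qed

definition "Z_gradient x = (moment x - Z x *\<^sub>R x) /\<^sub>R s"

lemma Z_has_derivative: "(Z has_derivative (\<lambda>h. inner h (Z_gradient x))) (at x)"
proof -
  obtain K where "K \<ge> 0" and kernel: "\<And>x y h :: 'a. norm h \<le> 1 \<Longrightarrow>
      \<bar>exp (- (norm (y - (x + h)))\<^sup>2 / (2 * s)) - exp (- (norm (y - x))\<^sup>2 / (2 * s)) * (1 + inner h (y - x) / s)\<bar>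
        \<le> K * (norm h)\<^sup>2"
    using gaussian_kernel_taylor[OF s_pos] by metis
  define I where "I = integral\<^sup>L lborel (\<lambda>y. exp (- f y / \<delta>))"
  have "I \<ge> 0" unfolding I_def by (rule integral_nonneg_AE) simp
  show ?thesis
  proof (rule has_derivative_of_quadratic_remainder)
    show "bounded_linear (\<lambda>h. inner h (Z_gradient x))" by (rule bounded_linear_inner_left)
    show "0 \<le> gauss_const * K * I" using gauss_const_pos \<open>K \<ge> 0\<close> \<open>I \<ge> 0\<close> by simp
    fix h :: 'a assume h: "norm h \<le> 1"
    define R where "R y = w (x + h) y - w x y - w x y * inner h (y - x) / s" for y
    have linear: "inner h (Z_gradient x) = integral\<^sup>L lborel (\<lambda>y. w x y * inner h (y - x) / s)"
      using integral_w_inner[of x h] by (simp add: Z_gradient_def divide_inverse_commute)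
    have "Z (x + h) - Z x - inner h (Z_gradient x) = integral\<^sup>L lborel R"
      unfolding linear R_def Z_def using integrable_w integral_w_inner(1)[of x h] by simp
    also have "\<bar>\<dots>\<bar> \<le> integral\<^sup>L lborel (\<lambda>y. gauss_const * K * (norm h)\<^sup>2 * exp (- f y / \<delta>))"
    proof (rule integral_abs_bound_integral)
      show "integrable lborel R" unfolding R_def using integrable_w integral_w_inner(1)[of x h] by simp
      show "integrable lborel (\<lambda>y. gauss_const * K * (norm h)\<^sup>2 * exp (- f y / \<delta>))"
        using integrable_exp_f by simp
      fix y
      have "R y = gauss_const * exp (- f y / \<delta>) * (exp (- (norm (y - (x + h)))\<^sup>2 / (2 * s))
          - exp (- (norm (y - x))\<^sup>2 / (2 * s)) * (1 + inner h (y - x) / s))"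
        unfolding R_def w_eq by (simp add: algebra_simps)
      then show "\<bar>R y\<bar> \<le> gauss_const * K * (norm h)\<^sup>2 * exp (- f y / \<delta>)"
        using mult_left_mono[OF kernel[OF h, of y x], of "gauss_const * exp (- f y / \<delta>)"] gauss_const_pos
        by (simp add: abs_mult mult_ac)
    qed
    also have "\<dots> = gauss_const * K * I * (norm h)\<^sup>2" using integrable_exp_f by (simp add: I_def)
    finally show "\<bar>Z (x + h) - Z x - inner h (Z_gradient x)\<bar> \<le> gauss_const * K * I * (norm h)\<^sup>2" .
  qed
qed

lemma soft_moreau_has_gradient:
  "GDERIV (soft_moreau lam \<delta> f) x :> (x - zprox \<delta> lam f x) /\<^sub>R lam"
proof -
  have "GDERIV (\<lambda>x. - \<delta> * ln (Z x)) x :> (- \<delta> * inverse (Z x)) *\<^sub>R Z_gradient x"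
    using Z_pos[of x] unfolding gderiv_def
    by (intro GDERIV_DERIV_compose[unfolded gderiv_def] Z_has_derivative)
       (auto intro!: derivative_eq_intros simp: divide_inverse)
  moreover have "(- \<delta> * inverse (Z x)) *\<^sub>R Z_gradient x = (x - zprox \<delta> lam f x) /\<^sub>R lam"
    using Z_pos[of x] lam_pos delta_pos
    by (simp add: Z_gradient_def zprox_eq s_def scaleR_diff_right field_simps)
  ultimately show ?thesis by (simp add: soft_moreau_eq[abs_def])
qed

definition "energy x y = f y / \<delta> + (norm (y - x))\<^sup>2 / (2 * s)"

definition "excess x y0 y = (f y - f y0) / \<delta> + inner (y - x) (y - y0) / s"

lemma w_eq_energy: "w x y = gauss_const * exp (- energy x y)"
  unfolding w_eq energy_def by (simp add: mult.assoc flip: exp_add)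

lemma w_mult_one_plus_energy_drop_le: "w x y * (1 + (energy x y - energy x v)) \<le> w x v"
proof -
  have "w x y * (1 + (energy x y - energy x v)) \<le> w x y * exp (energy x y - energy x v)"
    using w_pos[of x y] exp_ge_add_one_self by (intro mult_left_mono) auto
  also have "\<dots> = w x v" unfolding w_eq_energy by (simp add: mult.assoc flip: exp_add)
  finally show ?thesis .
qed

lemma energy_convex_combination:
  assumes "0 \<le> t" "t \<le> 1"
  shows "energy x ((1 - t) *\<^sub>R a + t *\<^sub>R b)
       \<le> (1 - t) * energy x a + t * energy x b - t * (1 - t) * ((norm (b - a))\<^sup>2 / (2 * s))"
proof -
  have "f ((1 - t) *\<^sub>R a + t *\<^sub>R b) / \<delta> \<le> ((1 - t) * f a + t * f b) / \<delta>"
    using convex_onD[OF convex_f assms] delta_pos by (simp add: divide_right_mono)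
  then have f: "f ((1 - t) *\<^sub>R a + t *\<^sub>R b) / \<delta> \<le> (1 - t) * (f a / \<delta>) + t * (f b / \<delta>)"
    by (simp add: add_divide_distrib)
  have "(norm ((1 - t) *\<^sub>R a + t *\<^sub>R b - x))\<^sup>2
      = (1 - t) * (norm (a - x))\<^sup>2 + t * (norm (b - x))\<^sup>2 - t * (1 - t) * (norm (b - a))\<^sup>2"
    using inner_convex_combination[of t a b x x] by (simp add: power2_norm_eq_inner)
  then have q: "(norm ((1 - t) *\<^sub>R a + t *\<^sub>R b - x))\<^sup>2 / (2 * s) = (1 - t) * ((norm (a - x))\<^sup>2 / (2 * s))
      + t * ((norm (b - x))\<^sup>2 / (2 * s)) - t * (1 - t) * ((norm (b - a))\<^sup>2 / (2 * s))"
    by (simp add: add_divide_distrib diff_divide_distrib)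
  show ?thesis
    unfolding energy_def using f q by (simp add: norm_minus_commute algebra_simps)
qed

lemma energy_diff_eq_excess:
  "energy x y - energy x y0 = excess x y0 y - (norm (y - y0))\<^sup>2 / (2 * s)"
proof -
  have "(norm (y - x))\<^sup>2 - (norm (y0 - x))\<^sup>2 = 2 * inner (y - x) (y - y0) - (norm (y - y0))\<^sup>2"
    unfolding power2_norm_eq_inner
    by (simp add: inner_diff_left inner_diff_right inner_commute algebra_simps)
  then have "((norm (y - x))\<^sup>2 - (norm (y0 - x))\<^sup>2) / (2 * s)
      = inner (y - x) (y - y0) / s - (norm (y - y0))\<^sup>2 / (2 * s)"
    by (simp add: diff_divide_distrib)
  then show ?thesis
    unfolding energy_def excess_def by (simp add: diff_divide_distrib algebra_simps)
qed

lemma w_excess_le_w_contracted: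
  assumes "0 \<le> t" "t \<le> 1"
  shows "w x y * (1 + (1 - t) * (excess x y0 y - (1 - t) * ((norm (y - y0))\<^sup>2 / (2 * s))))
       \<le> w x ((1 - t) *\<^sub>R y0 + t *\<^sub>R y)"
proof -
  define N where "N = (norm (y - y0))\<^sup>2 / (2 * s)"
  have convex: "energy x ((1 - t) *\<^sub>R y0 + t *\<^sub>R y)
      \<le> (1 - t) * energy x y0 + t * energy x y - t * (1 - t) * N"
    unfolding N_def by (rule energy_convex_combination[OF assms])
  have excess: "excess x y0 y = energy x y - energy x y0 + N"
    using energy_diff_eq_excess[of x y y0] by (simp add: N_def)
  have "(1 - t) * (excess x y0 y - (1 - t) * N)
      \<le> energy x y - energy x ((1 - t) *\<^sub>R y0 + t *\<^sub>R y)"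
    unfolding excess using convex by (simp add: algebra_simps)
  then have "w x y * (1 + (1 - t) * (excess x y0 y - (1 - t) * N))
      \<le> w x y * (1 + (energy x y - energy x ((1 - t) *\<^sub>R y0 + t *\<^sub>R y)))"
    using w_pos[of x y] by (intro mult_left_mono) auto
  then show ?thesis unfolding N_def using w_mult_one_plus_energy_drop_le order_trans by blast
qed

lemma integral_w_contracted:
  assumes "t > 0"
  shows "integrable lborel (\<lambda>y. w x ((1 - t) *\<^sub>R y0 + t *\<^sub>R y))"
    and "integral\<^sup>L lborel (\<lambda>y. w x ((1 - t) *\<^sub>R y0 + t *\<^sub>R y)) = Z x / t ^ DIM('a)"
proof -
  show "integrable lborel (\<lambda>y. w x ((1 - t) *\<^sub>R y0 + t *\<^sub>R y))"
    using lborel_integrable_affine[OF integrable_w] assms by simp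
  have "Z x = t ^ DIM('a) * integral\<^sup>L lborel (\<lambda>y. w x ((1 - t) *\<^sub>R y0 + t *\<^sub>R y))"
    using lborel_integral_affine[OF integrable_w, of t x "(1 - t) *\<^sub>R y0"] assms by (simp add: Z_def)
  then show "integral\<^sup>L lborel (\<lambda>y. w x ((1 - t) *\<^sub>R y0 + t *\<^sub>R y)) = Z x / t ^ DIM('a)"
    using assms by (simp add: field_simps)
qed

lemma integrable_w_mult_sq_dist: "integrable lborel (\<lambda>y. w x y * (norm (y - y0))\<^sup>2)"
proof (rule integrable_w_mult)
  fix y
  have "norm (y - y0) \<le> norm (y - x) + norm (x - y0)" using norm_triangle_ineq[of "y - x" "x - y0"] by simp
  then have "(norm (y - y0))\<^sup>2 \<le> (norm (y - x) + norm (x - y0))\<^sup>2" by (simp add: power_mono)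
  also have "\<dots> \<le> 2 * (norm (x - y0))\<^sup>2 + 2 * (norm (y - x))\<^sup>2"
    using zero_le_power2[of "norm (y - x) - norm (x - y0)"] by (simp add: power2_eq_square algebra_simps)
  finally show "\<bar>(norm (y - y0))\<^sup>2\<bar> \<le> 2 * (norm (x - y0))\<^sup>2 + 2 * (norm (y - x))\<^sup>2" by simp
qed simp

lemma integrable_w_mult_inner: "integrable lborel (\<lambda>y. w x y * inner (y - x) (y - y0))"
proof (rule integrable_w_mult)
  fix y
  have "\<bar>inner (y - x) (y - y0)\<bar> \<le> norm (y - x) * (norm (y - x) + norm (x - y0))"
  proof -
    have "norm (y - y0) \<le> norm (y - x) + norm (x - y0)"
      using norm_triangle_ineq[of "y - x" "x - y0"] by simp
    then show ?thesis
      using Cauchy_Schwarz_ineq2[of "y - x" "y - y0"] mult_left_mono[of _ _ "norm (y - x)"]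
      by (meson norm_ge_zero order_trans)
  qed
  also have "\<dots> \<le> norm (x - y0) + (1 + norm (x - y0)) * (norm (y - x))\<^sup>2"
    using mult_right_mono[OF le_one_plus_sq[of "norm (y - x)"], of "norm (x - y0)"]
    by (simp add: power2_eq_square algebra_simps)
  finally show "\<bar>inner (y - x) (y - y0)\<bar> \<le> norm (x - y0) + (1 + norm (x - y0)) * (norm (y - x))\<^sup>2" .
qed simp

text \<open>This is where a minimiser is needed: \<open>f - min f \<ge> 0\<close> is dominated by the
  contraction inequality at \<open>t = 1 / 2\<close> towards a minimiser.\<close>

lemma integrable_w_mult_f: "integrable lborel (\<lambda>y. w x y * f y)"
proof -
  obtain x0 where x0: "\<And>y. f x0 \<le> f y" using minimizer_exists by blast
  define u where "u y = (1 - 1 / 2) *\<^sub>R x0 + (1 / 2) *\<^sub>R y" for y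
  define B where "B y = 2 * w x (u y) - 2 * w x y - w x y * (inner (y - x) (y - x0) / s)
      + w x y * ((norm (y - x0))\<^sup>2 / (2 * s)) / 2" for y
  have dominating: "integrable lborel (\<lambda>y. \<delta> * B y)"
    unfolding B_def u_def using integral_w_contracted(1)[of "1 / 2" x x0] integrable_w[of x]
      integrable_w_mult_inner[of x x0] integrable_w_mult_sq_dist[of x x0] by simp
  have dominated: "\<bar>w x y * (f y - f x0)\<bar> \<le> \<bar>\<delta> * B y\<bar>" for y
  proof -
    have rearrange: "W * F \<le> 2 * Wu - 2 * W - W * I + W * N / 2"
      if "W * (1 + (1 - 1 / 2) * ((F + I) - (1 - 1 / 2) * N)) \<le> Wu" for W Wu F I N :: real
      using that by (simp add: ring_distribs)
    have "w x y * (1 + (1 - 1 / 2) * (excess x x0 y - (1 - 1 / 2) * ((norm (y - x0))\<^sup>2 / (2 * s))))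
        \<le> w x (u y)"
      unfolding u_def by (rule w_excess_le_w_contracted) simp_all
    then have "w x y * ((f y - f x0) / \<delta>) \<le> B y"
      unfolding B_def excess_def by (rule rearrange)
    then have "\<delta> * (w x y * ((f y - f x0) / \<delta>)) \<le> \<delta> * B y"
      using delta_pos by (intro mult_left_mono) auto
    then show ?thesis using w_pos[of x y] x0[of y] delta_pos by simp
  qed
  have "integrable lborel (\<lambda>y. w x y * (f y - f x0))"
  proof (rule Bochner_Integration.integrable_bound[OF dominating])
    show "(\<lambda>y. w x y * (f y - f x0)) \<in> borel_measurable lborel" by measurable
    show "AE y in lborel. norm (w x y * (f y - f x0)) \<le> norm (\<delta> * B y)"
      using dominated by (intro AE_I2) simp
  qed
  then have "integrable lborel (\<lambda>y. w x y * (f y - f x0) + f x0 * w x y)"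
    using integrable_w[of x] by simp
  then show ?thesis by (simp add: algebra_simps)
qed

lemma integrable_w_mult_excess: "integrable lborel (\<lambda>y. w x y * excess x y0 y)"
proof -
  have "(\<lambda>y. w x y * excess x y0 y)
      = (\<lambda>y. (w x y * f y - f y0 * w x y) / \<delta> + w x y * inner (y - x) (y - y0) / s)"
    by (simp add: excess_def algebra_simps diff_divide_distrib add_divide_distrib)
  then show ?thesis
    using integrable_w_mult_f[of x] integrable_w[of x] integrable_w_mult_inner[of x y0] by simp
qed

lemma integral_w_excess_bound:
  assumes t: "0 < t" "t < 1"
  shows "integral\<^sup>L lborel (\<lambda>y. w x y * excess x y0 y)
       \<le> Z x * ((inverse (t ^ DIM('a)) - 1) / (1 - t))
         + (1 - t) * (integral\<^sup>L lborel (\<lambda>y. w x y * (norm (y - y0))\<^sup>2) / (2 * s))"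
proof -
  define E where "E = integral\<^sup>L lborel (\<lambda>y. w x y * excess x y0 y)"
  define Q where "Q = integral\<^sup>L lborel (\<lambda>y. w x y * (norm (y - y0))\<^sup>2)"
  have expand: "(\<lambda>y. w x y * (1 + (1 - t) * (excess x y0 y - (1 - t) * ((norm (y - y0))\<^sup>2 / (2 * s)))))
      = (\<lambda>y. w x y + (1 - t) * (w x y * excess x y0 y)
             - (1 - t) * (1 - t) / (2 * s) * (w x y * (norm (y - y0))\<^sup>2))"
    by (rule ext) (simp add: algebra_simps)
  have integrable: "integrable lborel
      (\<lambda>y. w x y * (1 + (1 - t) * (excess x y0 y - (1 - t) * ((norm (y - y0))\<^sup>2 / (2 * s)))))"
    unfolding expand using integrable_w integrable_w_mult_excess integrable_w_mult_sq_dist by simp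
  have "Z x + (1 - t) * E - (1 - t) * (1 - t) / (2 * s) * Q
      = integral\<^sup>L lborel (\<lambda>y. w x y * (1 + (1 - t) * (excess x y0 y - (1 - t) * ((norm (y - y0))\<^sup>2 / (2 * s)))))"
    unfolding expand E_def Q_def Z_def
    using integrable_w integrable_w_mult_excess integrable_w_mult_sq_dist by simp
  also have "\<dots> \<le> integral\<^sup>L lborel (\<lambda>y. w x ((1 - t) *\<^sub>R y0 + t *\<^sub>R y))"
  proof (rule integral_mono[OF integrable integral_w_contracted(1)[OF t(1)]])
    fix y
    show "w x y * (1 + (1 - t) * (excess x y0 y - (1 - t) * ((norm (y - y0))\<^sup>2 / (2 * s))))
        \<le> w x ((1 - t) *\<^sub>R y0 + t *\<^sub>R y)"
      using t by (intro w_excess_le_w_contracted) auto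
  qed
  also have "\<dots> = Z x * inverse (t ^ DIM('a))"
    using integral_w_contracted(2)[OF t(1)] by (simp add: divide_inverse)
  finally have "(1 - t) * (E - (1 - t) * (Q / (2 * s))) \<le> Z x * (inverse (t ^ DIM('a)) - 1)"
    by (simp add: algebra_simps)
  then have "E - (1 - t) * (Q / (2 * s)) \<le> Z x * ((inverse (t ^ DIM('a)) - 1) / (1 - t))"
    using t by (simp add: pos_le_divide_eq mult.commute)
  then show ?thesis unfolding E_def Q_def by simp
qed

lemma integral_w_excess_le: "integral\<^sup>L lborel (\<lambda>y. w x y * excess x y0 y) \<le> real DIM('a) * Z x"
proof -
  define Q where "Q = integral\<^sup>L lborel (\<lambda>y. w x y * (norm (y - y0))\<^sup>2)"
  have "((\<lambda>t. Z x * ((inverse (t ^ DIM('a)) - 1) / (1 - t)) + (1 - t) * (Q / (2 * s)))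
      \<longlongrightarrow> Z x * real DIM('a) + (1 - 1) * (Q / (2 * s))) (at_left 1)"
    by (intro tendsto_intros inverse_power_difference_quotient)
  moreover have "\<forall>\<^sub>F t in at_left 1. t \<in> {0<..<1::real}"
    by (rule eventually_at_left_real) simp
  then have "\<forall>\<^sub>F t in at_left 1. integral\<^sup>L lborel (\<lambda>y. w x y * excess x y0 y)
      \<le> Z x * ((inverse (t ^ DIM('a)) - 1) / (1 - t)) + (1 - t) * (Q / (2 * s))"
    by (rule eventually_mono) (use integral_w_excess_bound in \<open>auto simp: Q_def\<close>)
  ultimately show ?thesis
    using tendsto_le[OF trivial_limit_at_left_real] tendsto_const by (fastforce simp: mult.commute)
qed

lemma convex_on_excess: "convex_on UNIV (excess x y0)"
proof -
  have "convex_on UNIV (\<lambda>y. f y + - f y0)"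
    by (rule convex_on_add[OF convex_f]) (simp add: convex_on_const)
  then have "convex_on UNIV (\<lambda>y. (f y + - f y0) / \<delta>)"
    using delta_pos by (intro convex_on_cdiv) auto
  moreover have "convex_on UNIV (\<lambda>y. inner (y - x) (y - y0) / s)"
    using s_pos by (intro convex_on_cdiv convex_on_inner_diff) auto
  ultimately show ?thesis
    unfolding excess_def[abs_def] using convex_on_add by fastforce
qed

lemma continuous_on_excess: "continuous_on UNIV (excess x y0)"
  unfolding excess_def[abs_def] using delta_pos s_pos by (auto intro!: continuous_intros continuous_f)

lemma zprox_eps_subgradient:
  "(x - zprox \<delta> lam f x) /\<^sub>R lam \<in> eps_subdiff f (real DIM('a) * \<delta>) (zprox \<delta> lam f x)"
proof -
  define z where "z = zprox \<delta> lam f x"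
  have "f y0 \<ge> f z + inner ((x - z) /\<^sub>R lam) (y0 - z) - real DIM('a) * \<delta>" for y0
  proof -
    have "Z x * excess x y0 z \<le> integral\<^sup>L lborel (\<lambda>y. w x y * excess x y0 y)"
      using jensen_weighted_integral[OF convex_on_excess[of x y0] continuous_on_excess[of x y0]
          integrable_w[of x] less_imp_le[OF w_pos[of x]] Z_pos[of x, unfolded Z_def]
          integrable_w_moment[of x] integrable_w_mult_excess[of x y0]]
      by (simp add: z_def zprox_eq Z_def moment_def)
    also have "\<dots> \<le> Z x * real DIM('a)" using integral_w_excess_le by (simp add: mult.commute)
    finally have "\<delta> * excess x y0 z \<le> real DIM('a) * \<delta>"
      using Z_pos[of x] delta_pos by (simp add: mult.commute)
    moreover have "\<delta> * excess x y0 z = f z - f y0 + inner (z - x) (z - y0) / lam"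
      using delta_pos lam_pos by (simp add: excess_def s_def field_simps)
    moreover have "inner ((x - z) /\<^sub>R lam) (y0 - z) = inner (z - x) (z - y0) / lam"
      by (metis divide_inverse_commute inner_minus_left inner_minus_right inner_scaleR_left minus_diff_eq)
    ultimately show ?thesis by simp
  qed
  then show ?thesis by (simp add: eps_subdiff_def z_def)
qed

end

theorem theorem14:
  fixes f :: "'a::euclidean_space \<Rightarrow> real"
    and lam \<delta> :: real
    and xs :: "nat \<Rightarrow> 'a"
  assumes lam: "lam > 0" and del: "\<delta> > 0"
    and cvx: "convex_on UNIV f"
    and cont: "continuous_on UNIV f"
    and minex: "\<exists>x0. \<forall>y. f x0 \<le> f y"
    and integ: "integrable lborel (\<lambda>y. exp (- f y / \<delta>))"
    and zoppa: "\<And>k. xs (Suc k) = zprox \<delta> lam f (xs k)"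
  shows "(\<forall>x. \<exists>g. GDERIV (soft_moreau lam \<delta> f) x :> g
                \<and> g \<in> eps_subdiff f (real DIM('a) * \<delta>) (zprox \<delta> lam f x))
       \<and> (\<forall>k\<ge>1. \<exists>g. GDERIV (soft_moreau lam \<delta> f) (xs (k - 1)) :> g
                \<and> f (xs k) - (INF y. f y)
                    \<le> norm g * infdist (xs k) {z. \<forall>y. f z \<le> f y} + real DIM('a) * \<delta>)"
proof -
  interpret soft_prox_setting f lam \<delta>
    using lam del cvx cont minex integ by unfold_locales
  have subgradient: "GDERIV (soft_moreau lam \<delta> f) x :> (x - zprox \<delta> lam f x) /\<^sub>R lam
      \<and> (x - zprox \<delta> lam f x) /\<^sub>R lam \<in> eps_subdiff f (real DIM('a) * \<delta>) (zprox \<delta> lam f x)" for x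
    using soft_moreau_has_gradient zprox_eps_subgradient by blast
  show ?thesis
  proof (intro conjI allI impI)
    fix x
    show "\<exists>g. GDERIV (soft_moreau lam \<delta> f) x :> g
        \<and> g \<in> eps_subdiff f (real DIM('a) * \<delta>) (zprox \<delta> lam f x)"
      using subgradient by blast
  next
    fix k :: nat assume "1 \<le> k"
    then have "xs k = zprox \<delta> lam f (xs (k - 1))" using zoppa[of "k - 1"] by simp
    then show "\<exists>g. GDERIV (soft_moreau lam \<delta> f) (xs (k - 1)) :> g
        \<and> f (xs k) - (INF y. f y) \<le> norm g * infdist (xs k) {z. \<forall>y. f z \<le> f y} + real DIM('a) * \<delta>"
      using subgradient[of "xs (k - 1)"] suboptimality_from_eps_subgradient[OF cont minex] by metis
  qed
qed

end
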